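(* Let $R\xrightarrow{\partial}A\xrightarrow{p}B$ be a spatial fibrous preorder. For $a\in A$, put $N(a)=\{y\in B\mid aRy\}$. Let $\tau$ be the set of those $\mathcal{O}\subseteq B$ such that for every $y\in\mathcal{O}$ there is $a\in A$ with $p(a)=y$ and $N(a)\subseteq\mathcal{O}$. Then the following hold. 1. $\tau$ is a topology on $B$. 2. Let $R'\xrightarrow{\partial'}A'\xrightarrow{p'}B'$ be another spatial fibrous preorder, with topology $\tau'$ on $B'$ obtained in the same way. If $(f,f^* )$ is a fibrous morphism from the first to the second, then $f\colon(B,\tau)\to(B',\tau')$ is continuous. 3. For every $a\in A$, the set $N(a)$ belongs to $\tau$ and contains $p(a)$.
   Context: A fibrous preorder is a sequence $R\xrightarrow{\partial}A\xrightarrow{p}B$ consisting of the following data: - sets $A$ and $B$; - a map $p\colon A\to B$; - a relation $R\subseteq A\times B$ (write $aRb$ for $(a,b)\in R$); - a map $\partial\colon R\to A$. These must satisfy, for all $a\in A$ and $b,y\in B$ with $aRb$: - (F1) $p\partial(a,b)=b$; - (F2) $aRp(a)$ (this holds for all $a\in A$); - (F3) $\partial(a,b)Ry\Rightarrow aRy$. Such a fibrous preorder is called spatial if there exist maps $s\colon B\to A$ and $m\colon A\times_BA\to A$, where $A\times_BA=\{(a,a')\in A\times A\mid p(a)=p(a')\}$, such that for all $a,a'\in A$ with $p(a)=p(a')$ and all $y\in B$: - (F4) $ps(y)=y$; - (F5) $pm(a,a')=p(a)$; - (F6) $m(a,a')Ry\Rightarrow (aRy \text{ and } a'Ry)$.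 Given fibrous preorders $\mathbf{A}=(R,A,B,p,\partial)$ and $\mathbf{A}'=(R',A',B',p',\partial')$, a fibrous morphism $\mathbf{A}\to\mathbf{A}'$ is a pair $(f,f^* )$ with $f\colon B\to B'$ a map and $f^*\colon A'_f\to A$ a map, where $A'_f=\{(a',b)\in A'\times B\mid p'(a')=f(b)\}$. These must satisfy, for all $(a',b)\in A'_f$ and $y\in B$: - $pf^*(a',b)=b$; - $f^*(a',b)Ry\Rightarrow a'R'f(y)$. *)

theory Defs
  imports "HOL-Analysis.Analysis"
begin

text \<open>The relation R is a set of pairs contained in A \<times> B; the map d (boundary)
  is given as a curried function, relevant only on R.\<close>

definition fibrous_preorder ::
  "('a \<times> 'b) set \<Rightarrow> 'a set \<Rightarrow> 'b set \<Rightarrow> ('a \<Rightarrow> 'b) \<Rightarrow> ('a \<Rightarrow> 'b \<Rightarrow> 'a) \<Rightarrow> bool" where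
  "fibrous_preorder R A B p d \<longleftrightarrow>
     R \<subseteq> A \<times> B \<and>
     (\<forall>a\<in>A. p a \<in> B) \<and>
     (\<forall>a b. (a, b) \<in> R \<longrightarrow> d a b \<in> A) \<and>
     (\<forall>a b. (a, b) \<in> R \<longrightarrow> p (d a b) = b) \<and>
     (\<forall>a\<in>A. (a, p a) \<in> R) \<and>
     (\<forall>a b y. (a, b) \<in> R \<longrightarrow> y \<in> B \<longrightarrow> (d a b, y) \<in> R \<longrightarrow> (a, y) \<in> R)"

definition spatial_fibrous_preorder ::
  "('a \<times> 'b) set \<Rightarrow> 'a set \<Rightarrow> 'b set \<Rightarrow> ('a \<Rightarrow> 'b) \<Rightarrow> ('a \<Rightarrow> 'b \<Rightarrow> 'a) \<Rightarrow> bool" where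
  "spatial_fibrous_preorder R A B p d \<longleftrightarrow>
     fibrous_preorder R A B p d \<and>
     (\<exists>s m. (\<forall>y\<in>B. s y \<in> A \<and> p (s y) = y) \<and>
            (\<forall>a\<in>A. \<forall>a'\<in>A. p a = p a' \<longrightarrow>
                m a a' \<in> A \<and> p (m a a') = p a \<and>
                (\<forall>y\<in>B. (m a a', y) \<in> R \<longrightarrow> (a, y) \<in> R \<and> (a', y) \<in> R)))"

definition fibrous_morphism ::
  "('a \<times> 'b) set \<Rightarrow> 'a set \<Rightarrow> 'b set \<Rightarrow> ('a \<Rightarrow> 'b) \<Rightarrow>
   ('c \<times> 'd) set \<Rightarrow> 'c set \<Rightarrow> 'd set \<Rightarrow> ('c \<Rightarrow> 'd) \<Rightarrow>
   ('b \<Rightarrow> 'd) \<Rightarrow> ('c \<Rightarrow> 'b \<Rightarrow> 'a) \<Rightarrow> bool" where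
  "fibrous_morphism R A B p R' A' B' p' f fs \<longleftrightarrow>
     (\<forall>b\<in>B. f b \<in> B') \<and>
     (\<forall>a'\<in>A'. \<forall>b\<in>B. p' a' = f b \<longrightarrow>
        fs a' b \<in> A \<and> p (fs a' b) = b \<and>
        (\<forall>y\<in>B. (fs a' b, y) \<in> R \<longrightarrow> (a', f y) \<in> R'))"

definition nbhd :: "('a \<times> 'b) set \<Rightarrow> 'b set \<Rightarrow> 'a \<Rightarrow> 'b set" where
  "nbhd R B a = {y \<in> B. (a, y) \<in> R}"

definition fib_opens :: "('a \<times> 'b) set \<Rightarrow> 'a set \<Rightarrow> 'b set \<Rightarrow> ('a \<Rightarrow> 'b) \<Rightarrow> 'b set set" where
  "fib_opens R A B p =
     {U. U \<subseteq> B \<and> (\<forall>y\<in>U. \<exists>a\<in>A. p a = y \<and> nbhd R B a \<subseteq> U)}"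

definition topology_on :: "'b set \<Rightarrow> 'b set set \<Rightarrow> bool" where
  "topology_on B \<tau> \<longleftrightarrow> istopology (\<lambda>U. U \<in> \<tau>) \<and> \<Union>\<tau> = B"

end

theory Submission
  imports Defs
begin

text \<open>The spatial structure makes the open sets a topology: the section s
  shows that B is open, and the meet m of two points over the same base point
  has a neighbourhood inside both of theirs, which gives binary intersections.
  Each N(a) is open because the boundary map \<partial> moves a to a point over any
  y in N(a) whose neighbourhood lies in N(a), by (F3). A fibrous morphism pulls
  a witness a' over f(x) back to the witness f*(a', x) over x, so preimages of
  open sets are open.\<close>

lemma Union_fib_opens:
  assumes "K \<subseteq> fib_opens R A B p"
  shows "\<Union>K \<in> fib_opens R A B p"
  using assms unfolding fib_opens_def by blast

lemma carrier_in_fib_opens: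
  assumes "spatial_fibrous_preorder R A B p d"
  shows "B \<in> fib_opens R A B p"
proof -
  obtain s where "\<forall>y\<in>B. s y \<in> A \<and> p (s y) = y"
    using assms unfolding spatial_fibrous_preorder_def by blast
  then show ?thesis unfolding fib_opens_def nbhd_def by auto
qed

lemma Int_fib_opens:
  assumes "spatial_fibrous_preorder R A B p d"
    and S: "S \<in> fib_opens R A B p" and T: "T \<in> fib_opens R A B p"
  shows "S \<inter> T \<in> fib_opens R A B p"
  unfolding fib_opens_def
proof (intro CollectI conjI ballI)
  obtain m where m: "\<forall>a\<in>A. \<forall>a'\<in>A. p a = p a' \<longrightarrow>
      m a a' \<in> A \<and> p (m a a') = p a \<and>
      (\<forall>y\<in>B. (m a a', y) \<in> R \<longrightarrow> (a, y) \<in> R \<and> (a', y) \<in> R)"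
    using assms(1) unfolding spatial_fibrous_preorder_def by blast
  show "S \<inter> T \<subseteq> B" using S unfolding fib_opens_def by blast
  fix y assume "y \<in> S \<inter> T"
  then obtain a a' where a: "a \<in> A" "p a = y" "nbhd R B a \<subseteq> S"
    and a': "a' \<in> A" "p a' = y" "nbhd R B a' \<subseteq> T"
    using S T unfolding fib_opens_def by blast
  then have meet: "m a a' \<in> A \<and> p (m a a') = y \<and>
      (\<forall>y\<in>B. (m a a', y) \<in> R \<longrightarrow> (a, y) \<in> R \<and> (a', y) \<in> R)"
    using m by metis
  then have "nbhd R B (m a a') \<subseteq> nbhd R B a \<inter> nbhd R B a'"
    unfolding nbhd_def by blast
  then show "\<exists>c\<in>A. p c = y \<and> nbhd R B c \<subseteq> S \<inter> T"
    using meet a(3) a'(3) by blast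
qed

lemma topology_on_fib_opens:
  assumes "spatial_fibrous_preorder R A B p d"
  shows "topology_on B (fib_opens R A B p)"
  unfolding topology_on_def istopology_def
proof (intro conjI allI impI)
  show "S \<inter> T \<in> fib_opens R A B p"
    if "S \<in> fib_opens R A B p" "T \<in> fib_opens R A B p" for S T
    using Int_fib_opens[OF assms that] .
  show "\<Union>K \<in> fib_opens R A B p" if "\<forall>S\<in>K. S \<in> fib_opens R A B p" for K
    using that by (intro Union_fib_opens subsetI) blast
  show "\<Union>(fib_opens R A B p) = B"
    using carrier_in_fib_opens[OF assms] unfolding fib_opens_def by blast
qed

lemma openin_topology_on:
  assumes "topology_on B \<tau>"
  shows "openin (topology (\<lambda>U. U \<in> \<tau>)) = (\<lambda>U. U \<in> \<tau>)"
  using assms unfolding topology_on_def by (simp add: topology_inverse')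

lemma topspace_topology_on:
  assumes "topology_on B \<tau>"
  shows "topspace (topology (\<lambda>U. U \<in> \<tau>)) = B"
  using assms unfolding topspace_def openin_topology_on[OF assms] topology_on_def by simp

lemma base_point_in_nbhd:
  assumes "fibrous_preorder R A B p d" and "a \<in> A"
  shows "p a \<in> nbhd R B a"
  using assms unfolding fibrous_preorder_def nbhd_def by simp

lemma nbhd_in_fib_opens:
  assumes "fibrous_preorder R A B p d"
  shows "nbhd R B a \<in> fib_opens R A B p"
  unfolding fib_opens_def
proof (intro CollectI conjI ballI)
  show "nbhd R B a \<subseteq> B" unfolding nbhd_def by blast
  fix y assume "y \<in> nbhd R B a"
  then have y: "y \<in> B" "(a, y) \<in> R" unfolding nbhd_def by auto
  have "d a y \<in> A" "p (d a y) = y"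
    using assms y unfolding fibrous_preorder_def by simp_all
  moreover have "nbhd R B (d a y) \<subseteq> nbhd R B a"
    using assms y unfolding fibrous_preorder_def nbhd_def by blast
  ultimately show "\<exists>c\<in>A. p c = y \<and> nbhd R B c \<subseteq> nbhd R B a" by blast
qed

lemma vimage_fib_opens:
  assumes mor: "fibrous_morphism R A B p R' A' B' p' f fs"
    and V: "V \<in> fib_opens R' A' B' p'"
  shows "{x \<in> B. f x \<in> V} \<in> fib_opens R A B p"
  unfolding fib_opens_def
proof (intro CollectI conjI ballI)
  show "{x \<in> B. f x \<in> V} \<subseteq> B" by blast
  fix x assume x: "x \<in> {x \<in> B. f x \<in> V}"
  then obtain a' where a': "a' \<in> A'" "p' a' = f x" "nbhd R' B' a' \<subseteq> V"
    using V unfolding fib_opens_def by blast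
  have "fs a' x \<in> A" "p (fs a' x) = x"
    and pulled_back: "\<forall>y\<in>B. (fs a' x, y) \<in> R \<longrightarrow> (a', f y) \<in> R'"
    using mor a' x unfolding fibrous_morphism_def by auto
  moreover have "\<forall>b\<in>B. f b \<in> B'"
    using mor unfolding fibrous_morphism_def by simp
  then have "nbhd R B (fs a' x) \<subseteq> {x \<in> B. f x \<in> V}"
    using pulled_back a'(3) unfolding nbhd_def by blast
  ultimately show "\<exists>a\<in>A. p a = x \<and> nbhd R B a \<subseteq> {x \<in> B. f x \<in> V}" by blast
qed

lemma continuous_map_fibrous_morphism:
  assumes "spatial_fibrous_preorder R A B p d"
    and "spatial_fibrous_preorder R' A' B' p' d'"
    and mor: "fibrous_morphism R A B p R' A' B' p' f fs"
  shows "continuous_map (topology (\<lambda>U. U \<in> fib_opens R A B p))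
                        (topology (\<lambda>U. U \<in> fib_opens R' A' B' p')) f"
proof -
  note T = topology_on_fib_opens[OF assms(1)] and T' = topology_on_fib_opens[OF assms(2)]
  show ?thesis
    unfolding continuous_map_def topspace_topology_on[OF T] topspace_topology_on[OF T']
      openin_topology_on[OF T] openin_topology_on[OF T']
  proof (intro conjI allI impI Pi_I)
    show "f x \<in> B'" if "x \<in> B" for x
      using mor that unfolding fibrous_morphism_def by blast
    show "{x \<in> B. f x \<in> V} \<in> fib_opens R A B p" if "V \<in> fib_opens R' A' B' p'" for V
      using vimage_fib_opens[OF mor that] .
  qed
qed

theorem mainTheorem2:
  fixes R :: "('a \<times> 'b) set" and A :: "'a set" and B :: "'b set"
    and p :: "'a \<Rightarrow> 'b" and d :: "'a \<Rightarrow> 'b \<Rightarrow> 'a"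
  assumes "spatial_fibrous_preorder R A B p d"
  shows "topology_on B (fib_opens R A B p)
    \<and> (\<forall>(R' :: ('c \<times> 'e) set) A' B' p' d' f fs.
          spatial_fibrous_preorder R' A' B' p' d' \<longrightarrow>
          fibrous_morphism R A B p R' A' B' p' f fs \<longrightarrow>
          continuous_map (topology (\<lambda>U. U \<in> fib_opens R A B p))
                         (topology (\<lambda>U. U \<in> fib_opens R' A' B' p')) f)
    \<and> (\<forall>a\<in>A. nbhd R B a \<in> fib_opens R A B p \<and> p a \<in> nbhd R B a)"
proof -
  have fp: "fibrous_preorder R A B p d"
    using assms unfolding spatial_fibrous_preorder_def by blast
  show ?thesis
    using topology_on_fib_opens[OF assms] continuous_map_fibrous_morphism[OF assms]
      nbhd_in_fib_opens[OF fp] base_point_in_nbhd[OF fp] by blast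
qed

end
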